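(* Let $\{x,x_1\}$ be a Bertrand D-pair. Then: (i) if one of the curves $x$, $x_1$ is a principal line, then $k_g - k_{g_1} = \lambda k_g k_{g_1}$; (ii) if $x_1$ is a geodesic curve, then $k_g = -\lambda \tau_g \tau_{g_1}$; (iii) if $x$ is a geodesic curve, then $k_{g_1} = \lambda \tau_g \tau_{g_1}$.
   Context: For a unit-speed curve $x(s)$ on an oriented surface $S\subset\mathbb{E}^3$, the Darboux frame is $\{T,g,n\}$ ($T$ unit tangent, $n$ unit surface normal along the curve, $g=n\times T$), with $\dot T = k_g g + k_n n$, $\dot g = -k_g T + \tau_g n$, $\dot n = -k_n T - \tau_g g$; $k_g,k_n,\tau_g$ are the geodesic curvature, normal curvature and geodesic torsion. For $x_1(s_1)$ on an oriented surface $S_1$ the analogous objects carry subscript $1$. $\{x,x_1\}$ is a Bertrand D-pair if there is a correspondence of points such that at corresponding points $g$ coincides with $g_1$; then $x(s)=x_1(s_1)+\lambda g_1(s_1)$ at corresponding points with $\lambda$ a nonzero constant. A curve is geodesic iff $k_g=0$ and a principal line iff $\tau_g=0$. *)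

theory Defs
  imports "HOL-Analysis.Analysis"
begin

text \<open>Darboux frame {T, g, n} of a unit-speed curve x (parameter s ranging over
  an open interval I) lying on an oriented surface: n is the unit surface normal
  along the curve, g = n x T, and kg, kn, tg are geodesic curvature, normal
  curvature and geodesic torsion, given by the Darboux equations.\<close>

definition darboux_frame ::
  "real set \<Rightarrow> (real \<Rightarrow> real^3) \<Rightarrow> (real \<Rightarrow> real^3) \<Rightarrow> (real \<Rightarrow> real^3) \<Rightarrow> (real \<Rightarrow> real^3)
   \<Rightarrow> (real \<Rightarrow> real) \<Rightarrow> (real \<Rightarrow> real) \<Rightarrow> (real \<Rightarrow> real) \<Rightarrow> bool" where
  "darboux_frame I x T g n kg kn tg \<longleftrightarrow>
     open I \<and> is_interval I \<and> I \<noteq> {} \<and>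
     (\<forall>s\<in>I.
        (x has_vector_derivative T s) (at s) \<and>
        norm (T s) = 1 \<and> norm (n s) = 1 \<and> T s \<bullet> n s = 0 \<and>
        g s = cross3 (n s) (T s) \<and>
        (T has_vector_derivative (kg s *\<^sub>R g s + kn s *\<^sub>R n s)) (at s) \<and>
        (g has_vector_derivative (- kg s *\<^sub>R T s + tg s *\<^sub>R n s)) (at s) \<and>
        (n has_vector_derivative (- kn s *\<^sub>R T s - tg s *\<^sub>R g s)) (at s))"

definition geodesic_curve :: "real set \<Rightarrow> (real \<Rightarrow> real) \<Rightarrow> bool" where
  "geodesic_curve I kg \<longleftrightarrow> (\<forall>s\<in>I. kg s = 0)"

definition principal_line :: "real set \<Rightarrow> (real \<Rightarrow> real) \<Rightarrow> bool" where
  "principal_line I tg \<longleftrightarrow> (\<forall>s\<in>I. tg s = 0)"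

text \<open>Bertrand D-pair: a (smooth, bijective) correspondence s = phi s1 of points
  such that g(phi s1) = g1 s1; then x(phi s1) = x1 s1 + lam g1 s1 for a nonzero
  constant lam.\<close>

definition bertrand_D_pair ::
  "real set \<Rightarrow> (real \<Rightarrow> real^3) \<Rightarrow> (real \<Rightarrow> real^3) \<Rightarrow>
   real set \<Rightarrow> (real \<Rightarrow> real^3) \<Rightarrow> (real \<Rightarrow> real^3) \<Rightarrow>
   (real \<Rightarrow> real) \<Rightarrow> real \<Rightarrow> bool" where
  "bertrand_D_pair I x g I1 x1 g1 phi lam \<longleftrightarrow>
     bij_betw phi I1 I \<and> (\<forall>s1\<in>I1. phi differentiable (at s1)) \<and>
     (\<forall>s1\<in>I1. g (phi s1) = g1 s1) \<and>
     lam \<noteq> 0 \<and> (\<forall>s1\<in>I1. x (phi s1) = x1 s1 + lam *\<^sub>R g1 s1)"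

end

theory Submission imports Defs begin

(* Differentiating x(phi s1) = x1(s1) + lam g1(s1) and g(phi s1) = g1(s1), with a = phi'(s1),
   gives  a T = (1 - lam kg1) T1 + lam tg1 n1  and  a (-kg T + tg n) = -kg1 T1 + tg1 n1.
   Both sides lie in the plane orthogonal to g = g1, so inner products and the cross product of
   these two vectors yield, with A = a^2 <> 0,
     A = (1 - lam kg1)^2 + lam^2 tg1^2,   A kg = kg1 (1 - lam kg1) - lam tg1^2,   A tg = tg1,
   and the three identities follow from these by elementary algebra. *)

lemma darboux_frame_at:
  assumes "darboux_frame I x T g n kg kn tg" and "s \<in> I"
  shows "(x has_vector_derivative T s) (at s)"
    and "norm (T s) = 1" and "norm (n s) = 1" and "T s \<bullet> n s = 0"
    and "g s = cross3 (n s) (T s)"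
    and "(g has_vector_derivative (- kg s *\<^sub>R T s + tg s *\<^sub>R n s)) (at s)"
  using assms unfolding darboux_frame_def by auto

lemma bertrand_D_pair_derivative_relations:
  assumes D: "darboux_frame I x T g n kg kn tg"
    and D1: "darboux_frame I1 x1 T1 g1 n1 kg1 kn1 tg1"
    and P: "bertrand_D_pair I x g I1 x1 g1 phi lam"
    and s1: "s1 \<in> I1"
  obtains a where
    "a *\<^sub>R T (phi s1) = T1 s1 + lam *\<^sub>R (- kg1 s1 *\<^sub>R T1 s1 + tg1 s1 *\<^sub>R n1 s1)"
    "a *\<^sub>R (- kg (phi s1) *\<^sub>R T (phi s1) + tg (phi s1) *\<^sub>R n (phi s1))
       = - kg1 s1 *\<^sub>R T1 s1 + tg1 s1 *\<^sub>R n1 s1"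
proof -
  from P have "phi differentiable (at s1)"
    and geq: "\<And>t. t \<in> I1 \<Longrightarrow> g (phi t) = g1 t"
    and xeq: "\<And>t. t \<in> I1 \<Longrightarrow> x (phi t) = x1 t + lam *\<^sub>R g1 t"
    and "phi s1 \<in> I"
    using s1 unfolding bertrand_D_pair_def bij_betw_def by auto
  note Ds = darboux_frame_at[OF D \<open>phi s1 \<in> I\<close>]
  note D1s = darboux_frame_at[OF D1 s1]
  have "open I1" using D1 unfolding darboux_frame_def by simp
  obtain a where da: "(phi has_vector_derivative a) (at s1)"
    using \<open>phi differentiable (at s1)\<close> vector_derivative_works by blast
  have "((x \<circ> phi) has_vector_derivative a *\<^sub>R T (phi s1)) (at s1)"
    by (rule vector_diff_chain_at[OF da Ds(1)])
  then have "((\<lambda>t. x1 t + lam *\<^sub>R g1 t) has_vector_derivative a *\<^sub>R T (phi s1)) (at s1)"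
    by (rule has_vector_derivative_transform_within_open[OF _ \<open>open I1\<close> s1]) (simp add: xeq)
  moreover have "((\<lambda>t. x1 t + lam *\<^sub>R g1 t) has_vector_derivative
      T1 s1 + lam *\<^sub>R (- kg1 s1 *\<^sub>R T1 s1 + tg1 s1 *\<^sub>R n1 s1)) (at s1)"
    using D1s by (auto intro!: derivative_eq_intros)
  ultimately have "a *\<^sub>R T (phi s1) = T1 s1 + lam *\<^sub>R (- kg1 s1 *\<^sub>R T1 s1 + tg1 s1 *\<^sub>R n1 s1)"
    by (rule vector_derivative_unique_at)
  moreover
  have "((g \<circ> phi) has_vector_derivative
      a *\<^sub>R (- kg (phi s1) *\<^sub>R T (phi s1) + tg (phi s1) *\<^sub>R n (phi s1))) (at s1)"
    by (rule vector_diff_chain_at[OF da Ds(6)])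
  then have "(g1 has_vector_derivative
      a *\<^sub>R (- kg (phi s1) *\<^sub>R T (phi s1) + tg (phi s1) *\<^sub>R n (phi s1))) (at s1)"
    by (rule has_vector_derivative_transform_within_open[OF _ \<open>open I1\<close> s1]) (simp add: geq)
  then have "a *\<^sub>R (- kg (phi s1) *\<^sub>R T (phi s1) + tg (phi s1) *\<^sub>R n (phi s1))
      = - kg1 s1 *\<^sub>R T1 s1 + tg1 s1 *\<^sub>R n1 s1"
    using vector_derivative_unique_at D1s(6) by blast
  ultimately show thesis by (rule that)
qed

lemma orthonormal_frame_relations:
  fixes T n T1 n1 :: "real^3" and a l k1 t1 kg tg :: real
  assumes "norm T = 1" "norm n = 1" "T \<bullet> n = 0"
    and "norm T1 = 1" "norm n1 = 1" "T1 \<bullet> n1 = 0"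
    and same_binormal: "cross3 n T = cross3 n1 T1"
    and tangent: "a *\<^sub>R T = T1 + l *\<^sub>R (- k1 *\<^sub>R T1 + t1 *\<^sub>R n1)"
    and normal: "a *\<^sub>R (- kg *\<^sub>R T + tg *\<^sub>R n) = - k1 *\<^sub>R T1 + t1 *\<^sub>R n1"
  shows "a \<noteq> 0" and "a\<^sup>2 = (1 - l * k1)\<^sup>2 + l\<^sup>2 * t1\<^sup>2"
    and "a\<^sup>2 * kg = k1 * (1 - l * k1) - l * t1\<^sup>2" and "a\<^sup>2 * tg = t1"
proof -
  have unit: "T \<bullet> T = 1" "n \<bullet> n = 1" "T1 \<bullet> T1 = 1" "n1 \<bullet> n1 = 1"
    using assms(1,2,4,5) by (simp_all add: norm_eq_sqrt_inner)
  have orth: "T \<bullet> n = 0" "n \<bullet> T = 0" "T1 \<bullet> n1 = 0" "n1 \<bullet> T1 = 0"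
    using assms(3,6) by (simp_all add: inner_commute)
  have "(a *\<^sub>R T) \<bullet> T1 = 1 - l * k1"
    unfolding tangent by (simp add: inner_simps unit orth algebra_simps)
  moreover have "(a *\<^sub>R (- kg *\<^sub>R T + tg *\<^sub>R n)) \<bullet> T1 = - k1"
    unfolding normal by (simp add: inner_simps unit orth)
  ultimately show "a \<noteq> 0" by auto
  have "(a *\<^sub>R T) \<bullet> (a *\<^sub>R T) = (1 - l * k1)\<^sup>2 + l\<^sup>2 * t1\<^sup>2"
    unfolding tangent by (simp add: inner_simps unit orth algebra_simps power2_eq_square)
  then show "a\<^sup>2 = (1 - l * k1)\<^sup>2 + l\<^sup>2 * t1\<^sup>2"
    by (simp add: unit power2_eq_square)
  have "(a *\<^sub>R T) \<bullet> (a *\<^sub>R (- kg *\<^sub>R T + tg *\<^sub>R n)) = - k1 * (1 - l * k1) + l * t1\<^sup>2"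
    unfolding tangent normal by (simp add: inner_simps unit orth algebra_simps power2_eq_square)
  then show "a\<^sup>2 * kg = k1 * (1 - l * k1) - l * t1\<^sup>2"
    by (simp add: inner_simps unit orth algebra_simps power2_eq_square)
  have "cross3 (a *\<^sub>R T) (a *\<^sub>R (- kg *\<^sub>R T + tg *\<^sub>R n)) = - t1 *\<^sub>R cross3 n1 T1"
    unfolding tangent normal
    by (simp only: cross_add_left cross_add_right cross_mult_left cross_mult_right cross_refl)
       (simp add: cross_skew[of T1 n1] algebra_simps)
  moreover have "cross3 (a *\<^sub>R T) (a *\<^sub>R (- kg *\<^sub>R T + tg *\<^sub>R n)) = - (a\<^sup>2 * tg) *\<^sub>R cross3 n T"
    by (simp only: cross_add_left cross_add_right cross_mult_left cross_mult_right cross_refl)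
       (simp add: cross_skew[of T n] algebra_simps power2_eq_square)
  ultimately have "(a\<^sup>2 * tg - t1) *\<^sub>R cross3 n T = 0"
    using same_binormal by (simp add: algebra_simps) metis
  moreover have "norm (cross3 n T) = 1"
    using norm_cross[of n T] assms(1,2) orth norm_ge_zero[of "cross3 n T"]
    by (auto simp add: power2_eq_1_iff)
  ultimately show "a\<^sup>2 * tg = t1" by auto
qed

lemma bertrand_D_pair_curvature_relations:
  assumes "darboux_frame I x T g n kg kn tg"
    and "darboux_frame I1 x1 T1 g1 n1 kg1 kn1 tg1"
    and P: "bertrand_D_pair I x g I1 x1 g1 phi lam"
    and s1: "s1 \<in> I1"
  obtains A where "A \<noteq> 0"
    and "A = (1 - lam * kg1 s1)\<^sup>2 + lam\<^sup>2 * (tg1 s1)\<^sup>2"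
    and "A * kg (phi s1) = kg1 s1 * (1 - lam * kg1 s1) - lam * (tg1 s1)\<^sup>2"
    and "A * tg (phi s1) = tg1 s1"
proof -
  have "phi s1 \<in> I" and "g (phi s1) = g1 s1"
    using P s1 unfolding bertrand_D_pair_def bij_betw_def by auto
  note Ds = darboux_frame_at[OF assms(1) \<open>phi s1 \<in> I\<close>]
  note D1s = darboux_frame_at[OF assms(2) s1]
  have binormal: "cross3 (n (phi s1)) (T (phi s1)) = cross3 (n1 s1) (T1 s1)"
    using Ds(5) D1s(5) \<open>g (phi s1) = g1 s1\<close> by simp
  obtain a where
    "a *\<^sub>R T (phi s1) = T1 s1 + lam *\<^sub>R (- kg1 s1 *\<^sub>R T1 s1 + tg1 s1 *\<^sub>R n1 s1)"
    "a *\<^sub>R (- kg (phi s1) *\<^sub>R T (phi s1) + tg (phi s1) *\<^sub>R n (phi s1))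
       = - kg1 s1 *\<^sub>R T1 s1 + tg1 s1 *\<^sub>R n1 s1"
    using bertrand_D_pair_derivative_relations[OF assms] .
  note rel = orthonormal_frame_relations[OF Ds(2-4) D1s(2-4) binormal this]
  show thesis by (rule that[OF _ rel(2-4)]) (simp add: rel(1))
qed

lemma D_pair_relations_tg1_zero:
  fixes A kg k1 t1 l :: real
  assumes "A \<noteq> 0" "A = (1 - l * k1)\<^sup>2 + l\<^sup>2 * t1\<^sup>2" "A * kg = k1 * (1 - l * k1) - l * t1\<^sup>2"
    and "t1 = 0"
  shows "kg - k1 = l * kg * k1"
proof -
  have A: "A = (1 - l * k1)\<^sup>2" and "A * kg = k1 * (1 - l * k1)"
    using assms(2-4) by simp_all
  have "(1 - l * k1) * ((1 - l * k1) * kg - k1) = A * kg - k1 * (1 - l * k1)"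
    unfolding A by (simp add: algebra_simps power2_eq_square)
  then have "(1 - l * k1) * ((1 - l * k1) * kg - k1) = 0"
    using \<open>A * kg = k1 * (1 - l * k1)\<close> by simp
  moreover have "1 - l * k1 \<noteq> 0" using A \<open>A \<noteq> 0\<close> by auto
  ultimately have "(1 - l * k1) * kg = k1" by simp
  then show ?thesis by (simp add: algebra_simps)
qed

lemma D_pair_relations_kg1_zero:
  fixes A kg tg k1 t1 l :: real
  assumes "A \<noteq> 0" "A * kg = k1 * (1 - l * k1) - l * t1\<^sup>2" "A * tg = t1"
    and "k1 = 0"
  shows "kg = - l * tg * t1"
proof -
  have "A * kg = - l * t1 * (A * tg)"
    using assms(2,4) by (simp add: \<open>A * tg = t1\<close> power2_eq_square)
  also have "\<dots> = A * (- l * tg * t1)" by (simp add: algebra_simps)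
  finally show ?thesis using \<open>A \<noteq> 0\<close> mult_left_cancel by blast
qed

lemma D_pair_relations_kg_zero:
  fixes A tg k1 t1 l :: real
  assumes "A \<noteq> 0" "A = (1 - l * k1)\<^sup>2 + l\<^sup>2 * t1\<^sup>2" "0 = k1 * (1 - l * k1) - l * t1\<^sup>2"
    and "A * tg = t1"
  shows "k1 = l * tg * t1"
proof -
  have t1sq: "l * t1\<^sup>2 = k1 * (1 - l * k1)" using assms(3) by simp
  have "A * k1 = k1 * (1 - l * k1)\<^sup>2 + l * k1 * (l * t1\<^sup>2)"
    unfolding assms(2) by (simp add: algebra_simps power2_eq_square)
  also have "\<dots> = l * t1\<^sup>2"
    unfolding t1sq by (simp add: algebra_simps power2_eq_square)
  also have "\<dots> = A * (l * tg * t1)"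
    using assms(4) by (simp add: algebra_simps power2_eq_square)
  finally show ?thesis using \<open>A \<noteq> 0\<close> by simp
qed

theorem mainTheorem4:
  fixes x T g n x1 T1 g1 n1 :: "real \<Rightarrow> real^3"
    and kg kn tg kg1 kn1 tg1 phi :: "real \<Rightarrow> real"
    and I I1 :: "real set" and lam :: real
  assumes "darboux_frame I x T g n kg kn tg"
    and "darboux_frame I1 x1 T1 g1 n1 kg1 kn1 tg1"
    and "bertrand_D_pair I x g I1 x1 g1 phi lam"
  shows "(principal_line I tg \<or> principal_line I1 tg1 \<longrightarrow>
           (\<forall>s1\<in>I1. kg (phi s1) - kg1 s1 = lam * kg (phi s1) * kg1 s1))
       \<and> (geodesic_curve I1 kg1 \<longrightarrow>
           (\<forall>s1\<in>I1. kg (phi s1) = - lam * tg (phi s1) * tg1 s1))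
       \<and> (geodesic_curve I kg \<longrightarrow>
           (\<forall>s1\<in>I1. kg1 s1 = lam * tg (phi s1) * tg1 s1))"
proof (intro conjI impI ballI)
  fix s1 assume s1: "s1 \<in> I1"
  have "phi s1 \<in> I" using assms(3) s1 by (auto simp: bertrand_D_pair_def bij_betw_def)
  obtain A where rel: "A \<noteq> 0" "A = (1 - lam * kg1 s1)\<^sup>2 + lam\<^sup>2 * (tg1 s1)\<^sup>2"
      "A * kg (phi s1) = kg1 s1 * (1 - lam * kg1 s1) - lam * (tg1 s1)\<^sup>2"
      "A * tg (phi s1) = tg1 s1"
    using bertrand_D_pair_curvature_relations[OF assms s1] .
  show "kg (phi s1) - kg1 s1 = lam * kg (phi s1) * kg1 s1"
    if "principal_line I tg \<or> principal_line I1 tg1"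
    using that rel s1 \<open>phi s1 \<in> I\<close>
    by (auto simp: principal_line_def intro: D_pair_relations_tg1_zero[OF rel(1-3)])
  show "kg (phi s1) = - lam * tg (phi s1) * tg1 s1" if "geodesic_curve I1 kg1"
    using that s1 by (intro D_pair_relations_kg1_zero[OF rel(1,3,4)]) (simp add: geodesic_curve_def)
  show "kg1 s1 = lam * tg (phi s1) * tg1 s1" if "geodesic_curve I kg"
    using that \<open>phi s1 \<in> I\<close> rel(3)
    by (intro D_pair_relations_kg_zero[OF rel(1,2) _ rel(4)]) (simp add: geodesic_curve_def)
qed

end
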